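(* Assume $p\equiv-1\pmod 6$ and let $q=p^f$. Let $S=\{1,5\}\times\{1,\dots,q-1\}$, and let $p$ act on $S$ by $(b,a)\mapsto(b',a')$ where $b'=6-b$ and $a'\in\{1,\dots,q-1\}$ is determined by $$a'\equiv pa-\tfrac{p+1}{6}b+1\pmod{q-1}.$$ Let $S_0=\{(1,a):0<a<q/6\}$ and $S_1=\{(5,a):5q/6<a<q\}$. Then every orbit $o$ of the group $\langle p\rangle$ generated by this action satisfies $|o\cap S_0|=|o\cap S_1|$.
   Context: The map $(b,a)\mapsto(b',a')$ is a bijection of $S$ (it corresponds to multiplication by $p$ on pairs $(i,j)$ with $i\in\{\pm1\}\subset(\mathbb Z/6)^\times$, $j\in\mathbb Z/6(q-1)\mathbb Z$, $j\equiv 6a-b$, $i\equiv b\bmod 6$), so $\langle p\rangle$ acts on the finite set $S$. *)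

theory Defs
  imports "HOL-Computational_Algebra.Primes"
begin

definition S_set :: "int \<Rightarrow> (int \<times> int) set" where
  "S_set q = {1, 5} \<times> {1..q-1}"

definition p_act :: "int \<Rightarrow> int \<Rightarrow> int \<times> int \<Rightarrow> int \<times> int" where
  "p_act p q x = (case x of (b, a) \<Rightarrow>
     (6 - b, ((p * a - ((p + 1) div 6) * b + 1 - 1) mod (q - 1)) + 1))"

definition p_orbit :: "int \<Rightarrow> int \<Rightarrow> int \<times> int \<Rightarrow> (int \<times> int) set" where
  "p_orbit p q x =
     (let R = {(y, p_act p q y) | y. y \<in> S_set q} in {z. (x, z) \<in> (R \<union> R\<inverse>)\<^sup>*})"

definition S0_set :: "int \<Rightarrow> (int \<times> int) set" where
  "S0_set q = {(1, a) | a. 0 < a \<and> 6 * a < q}"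

definition S1_set :: "int \<Rightarrow> (int \<times> int) set" where
  "S1_set q = {(5, a) | a. 5 * q < 6 * a \<and> a < q}"

end

theory Submission
  imports Defs "HOL-Number_Theory.Cong"
begin

text \<open>Encode \<open>(b, a) \<in> S\<close> by \<open>j = 6a - b \<in> [0, 6(q-1))\<close>. The action of \<open>p\<close> becomes
  \<open>j \<mapsto> p j mod 6(q-1)\<close>, \<open>S\<^sub>0\<close> becomes the residues \<open>\<equiv> 5 (mod 6)\<close> in \<open>(0, q-1)\<close> and \<open>S\<^sub>1\<close> the
  residues \<open>\<equiv> 1 (mod 6)\<close> in \<open>(5(q-1), 6(q-1))\<close>. It suffices to inject each of these two
  sets into the other by maps of the form \<open>j \<mapsto> p\<^sup>n j mod 6(q-1)\<close>, since such maps never leave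
  an orbit. For \<open>f\<close> odd, \<open>q \<equiv> 5 (mod 6)\<close> and multiplication by \<open>q = p\<^sup>f\<close> is the shift by
  \<open>\<plusminus>5(q-1)\<close> between the two sets. For \<open>f\<close> even, \<open>q \<equiv> 1 (mod 6)\<close>, so multiplication by \<open>q\<close>
  adds \<open>(q-1)(j mod 6)\<close>; after one multiplication by \<open>p\<close>, a power of \<open>q\<close> moves \<open>p j\<close> into
  the top, respectively bottom, block of length \<open>q-1\<close>.\<close>

definition power_injection :: "int \<Rightarrow> int \<Rightarrow> int set \<Rightarrow> int set \<Rightarrow> bool" where
  "power_injection P N I J \<longleftrightarrow>
     (\<exists>\<phi>. inj_on \<phi> I \<and> \<phi> ` I \<subseteq> J \<and> (\<forall>i\<in>I. \<exists>n. P ^ n * i mod N = \<phi> i))"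

lemma power_injectionI:
  assumes "inj_on \<phi> I" "\<phi> ` I \<subseteq> J" "\<And>i. i \<in> I \<Longrightarrow> \<exists>n. P ^ n * i mod N = \<phi> i"
  shows "power_injection P N I J"
  using assms unfolding power_injection_def by blast

lemma card_le_if_power_injection:
  fixes g :: "'a \<Rightarrow> 'a" and e :: "'a \<Rightarrow> int"
  assumes "finite C" "C \<subseteq> S" "g ` C \<subseteq> C" "g ` S \<subseteq> S"
    and encode: "\<And>z. z \<in> S \<Longrightarrow> e (g z) = P * e z mod N"
    and "e ` S \<subseteq> {0..<N}" "inj_on e S"
    and A: "\<And>z. z \<in> S \<Longrightarrow> z \<in> A \<longleftrightarrow> e z \<in> I"
    and B: "\<And>z. z \<in> S \<Longrightarrow> z \<in> B \<longleftrightarrow> e z \<in> J"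
    and "power_injection P N I J"
  shows "card (C \<inter> A) \<le> card (C \<inter> B)"
proof -
  obtain \<phi> where \<phi>: "inj_on \<phi> I" "\<phi> ` I \<subseteq> J" "\<And>i. i \<in> I \<Longrightarrow> \<exists>n. P ^ n * i mod N = \<phi> i"
    using assms(10) unfolding power_injection_def by blast
  have iterate: "(g ^^ n) z \<in> S \<and> e ((g ^^ n) z) = P ^ n * e z mod N" if "z \<in> S" for n z
  proof (induction n)
    case 0
    show ?case using that assms(6) by auto
  next
    case (Suc n)
    then show ?case using assms(4) encode by (auto simp: mod_mult_right_eq mult.assoc)
  qed
  have iterate_C: "(g ^^ n) z \<in> C" if "z \<in> C" for n z
    using that assms(3) by (induction n) auto
  have "\<exists>w \<in> C \<inter> B. e w = \<phi> (e z)" if z: "z \<in> C \<inter> A" for z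
  proof -
    have "z \<in> S" "e z \<in> I" using z assms(2) A by auto
    then obtain n where "P ^ n * e z mod N = \<phi> (e z)" using \<phi>(3) by blast
    moreover have "(g ^^ n) z \<in> S" "\<phi> (e z) \<in> J" using iterate \<open>z \<in> S\<close> \<open>e z \<in> I\<close> \<phi>(2) by auto
    ultimately show ?thesis using iterate[OF \<open>z \<in> S\<close>, of n] iterate_C z B by (intro bexI[of _ "(g ^^ n) z"]) auto
  qed
  then obtain h where h: "\<And>z. z \<in> C \<inter> A \<Longrightarrow> h z \<in> C \<inter> B \<and> e (h z) = \<phi> (e z)"
    by metis
  have "inj_on h (C \<inter> A)"
  proof (rule inj_onI)
    fix z w assume zw: "z \<in> C \<inter> A" "w \<in> C \<inter> A" "h z = h w"
    then have "e z \<in> I" "e w \<in> I" using assms(2) A by auto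
    with zw have "e z = e w" using h \<phi>(1) by (metis inj_onD)
    then show "z = w" using zw assms(2,7) by (auto dest: inj_onD)
  qed
  then show ?thesis
    using h assms(1) by (intro card_inj_on_le) auto
qed

definition low_residues :: "int \<Rightarrow> int set" where
  "low_residues d = {j. j mod 6 = 5 \<and> 0 < j \<and> j < d}"

definition high_residues :: "int \<Rightarrow> int set" where
  "high_residues d = {j. j mod 6 = 1 \<and> 5 * d < j \<and> j < 6 * d}"

definition j_index :: "int \<times> int \<Rightarrow> int" where
  "j_index z = 6 * snd z - fst z"

lemma six_mult_add_mod:
  fixes X b d :: int
  assumes "0 \<le> b" "b < 6" "0 \<le> d"
  shows "(6 * X + b) mod (6 * d) = 6 * (X mod d) + b"
proof -
  have "(6 * X + b) div 6 = X" "(6 * X + b) mod 6 = b"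
    using assms by simp_all
  then show ?thesis
    using zmod_zmult2_eq[OF assms(3), of "6 * X + b" 6] by simp
qed

lemma p_act_in_S_set:
  assumes "q \<ge> 2" "z \<in> S_set q"
  shows "p_act P q z \<in> S_set q"
proof -
  obtain b a where z: "z = (b, a)" and b: "b = 1 \<or> b = 5"
    using assms(2) unfolding S_set_def by auto
  define X where "X = P * a - (P + 1) div 6 * b"
  have "p_act P q z = (6 - b, X mod (q - 1) + 1)"
    by (simp add: p_act_def z X_def)
  moreover have "0 \<le> X mod (q - 1)" "X mod (q - 1) < q - 1"
    using assms(1) by simp_all
  ultimately show ?thesis
    using b by (auto simp: S_set_def)
qed

lemma j_index_p_act:
  fixes P q :: int
  assumes "P mod 6 = 5" "q \<ge> 1" "z \<in> S_set q"
  shows "j_index (p_act P q z) = P * j_index z mod (6 * (q - 1))"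
proof -
  obtain b a where z: "z = (b, a)" and b: "b = 1 \<or> b = 5"
    using assms(3) unfolding S_set_def by auto
  define k where "k = (P + 1) div 6"
  have P: "P = 6 * k - 1" using assms(1) unfolding k_def by presburger
  define X where "X = P * a - k * b"
  have "j_index (p_act P q z) = 6 * (X mod (q - 1)) + b"
    by (simp add: j_index_def p_act_def z X_def k_def)
  also have "\<dots> = (6 * X + b) mod (6 * (q - 1))"
    using b assms(2) by (intro six_mult_add_mod[symmetric]) auto
  also have "6 * X + b = P * j_index z"
    by (simp add: X_def j_index_def z P algebra_simps)
  finally show ?thesis .
qed

lemma j_index_range: "z \<in> S_set q \<Longrightarrow> j_index z \<in> {0..<6 * (q - 1)}"
  by (auto simp: S_set_def j_index_def)

lemma inj_on_j_index: "inj_on j_index (S_set q)"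
proof (rule inj_onI)
  fix z w assume "z \<in> S_set q" "w \<in> S_set q" "j_index z = j_index w"
  then show "z = w"
    unfolding S_set_def j_index_def by (cases z, cases w) (auto, presburger+)
qed

lemma S0_set_iff_low_residue:
  "z \<in> S_set q \<Longrightarrow> z \<in> S0_set q \<longleftrightarrow> j_index z \<in> low_residues (q - 1)"
  unfolding S_set_def S0_set_def j_index_def low_residues_def by (cases z) (auto, presburger+)

lemma S1_set_iff_high_residue:
  "z \<in> S_set q \<Longrightarrow> z \<in> S1_set q \<longleftrightarrow> j_index z \<in> high_residues (q - 1)"
  unfolding S_set_def S1_set_def j_index_def high_residues_def by (cases z) (auto, presburger+)

definition p_step :: "int \<Rightarrow> int \<Rightarrow> ((int \<times> int) \<times> (int \<times> int)) set" where
  "p_step P q = {(y, p_act P q y) | y. y \<in> S_set q}"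

lemma p_orbit_eq: "p_orbit P q x = {z. (x, z) \<in> (p_step P q \<union> (p_step P q)\<inverse>)\<^sup>*}"
  unfolding p_orbit_def p_step_def by (simp add: Let_def)

lemma p_orbit_subset_S_set:
  assumes "p_act P q ` S_set q \<subseteq> S_set q" "x \<in> S_set q"
  shows "p_orbit P q x \<subseteq> S_set q"
proof
  fix z assume "z \<in> p_orbit P q x"
  then have "(x, z) \<in> (p_step P q \<union> (p_step P q)\<inverse>)\<^sup>*"
    by (simp add: p_orbit_eq)
  then show "z \<in> S_set q"
    by (induction rule: rtrancl_induct) (use assms in \<open>auto simp: p_step_def\<close>)
qed

lemma p_act_in_p_orbit:
  assumes "z \<in> p_orbit P q x" "z \<in> S_set q"
  shows "p_act P q z \<in> p_orbit P q x"
proof -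
  have "(z, p_act P q z) \<in> p_step P q \<union> (p_step P q)\<inverse>"
    using assms(2) unfolding p_step_def by blast
  then show ?thesis
    using assms(1) by (auto simp: p_orbit_eq intro: rtrancl_into_rtrancl)
qed

lemma power_mult_cong_linear:
  fixes q y :: int
  shows "[q ^ t * y = y + int t * (q - 1) * y] (mod (q - 1)\<^sup>2)"
proof (induction t)
  case 0
  show ?case by simp
next
  case (Suc t)
  then have "[q ^ Suc t * y = q * (y + int t * (q - 1) * y)] (mod (q - 1)\<^sup>2)"
    by (simp add: cong_scalar_left mult.assoc)
  moreover have "q * (y + int t * (q - 1) * y) = y + int (Suc t) * (q - 1) * y + (int t * y) * (q - 1)\<^sup>2"
    by (simp add: algebra_simps power2_eq_square)
  ultimately show ?case
    by (simp add: cong_def)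
qed

lemma mod_six_unit_square:
  fixes y :: int
  assumes "y mod 6 \<in> {1, 5}"
  shows "[y * y = 1] (mod 6)"
proof -
  have "(y * y) mod 6 = (y mod 6) * (y mod 6) mod 6" by (simp add: mod_mult_eq)
  then show ?thesis using assms by (auto simp: cong_def)
qed

lemma cong_mult_right_modulus:
  fixes a b c m :: int
  assumes "[a = b] (mod m)"
  shows "[a * c = b * c] (mod m * c)"
  using assms by (simp add: cong_def mod_mult_mult2)

text \<open>Since \<open>q \<equiv> 1 (mod 6)\<close>, \<open>q\<^sup>t y \<equiv> y + t (y mod 6) (q-1) (mod 6(q-1))\<close>: the powers of \<open>q\<close>
  walk \<open>y\<close> through the six blocks \<open>[k(q-1), (k+1)(q-1))\<close>.\<close>

lemma power_mult_mod_reaches_block: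
  fixes q y k :: int
  assumes "6 dvd q - 1" "q \<ge> 2" "y mod 6 \<in> {1, 5}" "0 \<le> k" "k < 6"
  shows "\<exists>t. q ^ t * y mod (6 * (q - 1)) = k * (q - 1) + y mod (q - 1)"
proof -
  define d where "d = q - 1"
  define s where "s = y div d"
  define t where "t = nat ((k - s) * y mod 6)" \<comment> \<open>\<open>y\<close> is its own inverse modulo 6\<close>
  have "[int t * y = (k - s) * (y * y)] (mod 6)"
    unfolding t_def by (simp add: cong_def mod_mult_left_eq mult.assoc)
  also have "[(k - s) * (y * y) = (k - s) * 1] (mod 6)"
    using mod_six_unit_square[OF assms(3)] by (rule cong_scalar_left)
  finally have "[s + int t * y = k] (mod 6)"
    using cong_add_lcancel[of s "int t * y" "k - s" 6] by simp
  then have shift: "[(s + int t * y) * d = k * d] (mod 6 * d)"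
    by (rule cong_mult_right_modulus)
  have "6 * d dvd d\<^sup>2"
    using assms(1) unfolding d_def power2_eq_square by (rule mult_dvd_mono) simp
  then have "[q ^ t * y = y + int t * d * y] (mod 6 * d)"
    using power_mult_cong_linear d_def cong_dvd_modulus by blast
  also have "y + int t * d * y = y mod d + (s + int t * y) * d"
    by (simp add: s_def algebra_simps)
  also have "[y mod d + (s + int t * y) * d = y mod d + k * d] (mod 6 * d)"
    using shift by (rule cong_add_lcancel[THEN iffD2])
  finally have "q ^ t * y mod (6 * d) = (k * d + y mod d) mod (6 * d)"
    by (simp add: cong_def add.commute)
  also have "\<dots> = k * d + y mod d"
  proof (rule mod_pos_pos_trivial)
    have "k * d \<le> 5 * d" using assms d_def by (intro mult_right_mono) auto
    then show "k * d + y mod d < 6 * d" using assms d_def by (smt (verit) pos_mod_bound)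
  qed (use assms d_def in auto)
  finally show ?thesis unfolding d_def by blast
qed

lemma mult_mod_six_pred:
  fixes q j :: int
  shows "q * j mod (6 * (q - 1)) = (j + (q - 1) * (j mod 6)) mod (6 * (q - 1))"
proof -
  have "q * j = j + (q - 1) * j" by (simp add: algebra_simps)
  then have "q * j mod (6 * (q - 1)) = (j + (q - 1) * j) mod (6 * (q - 1))" by (simp only:)
  also have "\<dots> = (j + (q - 1) * j mod (6 * (q - 1))) mod (6 * (q - 1))"
    by (rule mod_add_right_eq[symmetric])
  also have "(q - 1) * j mod (6 * (q - 1)) = (q - 1) * (j mod 6)"
    by (subst mult.commute[of 6]) (rule mod_mult_mult1)
  finally show ?thesis .
qed

lemma inj_on_mult_mod:
  fixes c d P :: int
  assumes "coprime P d" "A \<subseteq> {c..<c + d}"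
  shows "inj_on (\<lambda>j. P * j mod d) A"
proof (rule inj_onI)
  fix i j assume ij: "i \<in> A" "j \<in> A" and eq: "P * i mod d = P * j mod d"
  from eq have "[P * i = P * j] (mod d)" unfolding cong_def .
  then have "[i - c = j - c] (mod d)"
    using assms(1) by (simp add: cong_mult_lcancel cong_diff)
  then have "(i - c) mod d = (j - c) mod d" unfolding cong_def .
  moreover have "0 \<le> i - c" "i - c < d" "0 \<le> j - c" "j - c < d" using ij assms(2) by auto
  ultimately show "i = j" by (simp add: mod_pos_pos_trivial)
qed

lemma five_times_pred_mod_six:
  fixes q :: int
  assumes "q mod 6 = 5"
  shows "5 * (q - 1) mod 6 = 2"
proof -
  have "(q - 1) mod 6 = 4" using assms by (simp add: mod_diff_left_eq[symmetric, of q])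
  have "5 * (q - 1) mod 6 = 5 * ((q - 1) mod 6) mod 6" by (rule mod_mult_right_eq[symmetric])
  also have "\<dots> = 2" using \<open>(q - 1) mod 6 = 4\<close> by simp
  finally show ?thesis .
qed

lemma low_residue_shift:
  fixes q j :: int
  assumes "q mod 6 = 5" "j \<in> low_residues (q - 1)"
  shows "j + 5 * (q - 1) \<in> high_residues (q - 1)"
proof -
  have "(j + 5 * (q - 1)) mod 6 = (j mod 6 + 5 * (q - 1) mod 6) mod 6" by (rule mod_add_eq[symmetric])
  then show ?thesis using assms five_times_pred_mod_six[OF assms(1)] by (simp add: low_residues_def high_residues_def)
qed

lemma high_residue_shift:
  fixes q j :: int
  assumes "q mod 6 = 5" "j \<in> high_residues (q - 1)"
  shows "j - 5 * (q - 1) \<in> low_residues (q - 1)"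
proof -
  have "(j - 5 * (q - 1)) mod 6 = (j mod 6 - 5 * (q - 1) mod 6) mod 6" by (rule mod_diff_eq[symmetric])
  then show ?thesis using assms five_times_pred_mod_six[OF assms(1)] by (simp add: low_residues_def high_residues_def)
qed

lemma power_injections_odd_exponent:
  fixes P q :: int
  assumes "q mod 6 = 5" "q = P ^ f"
  shows "power_injection P (6 * (q - 1)) (low_residues (q - 1)) (high_residues (q - 1))"
    and "power_injection P (6 * (q - 1)) (high_residues (q - 1)) (low_residues (q - 1))"
proof -
  show "power_injection P (6 * (q - 1)) (low_residues (q - 1)) (high_residues (q - 1))"
  proof (rule power_injectionI)
    show "inj_on (\<lambda>j. j + 5 * (q - 1)) (low_residues (q - 1))"
      by (rule inj_onI) simp
    show "(\<lambda>j. j + 5 * (q - 1)) ` low_residues (q - 1) \<subseteq> high_residues (q - 1)"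
      using low_residue_shift[OF assms(1)] by blast
    fix j assume "j \<in> low_residues (q - 1)"
    then have j: "j mod 6 = 5" "0 < j" "j < q - 1"
      by (simp_all add: low_residues_def)
    have "q * j mod (6 * (q - 1)) = (j + 5 * (q - 1)) mod (6 * (q - 1))"
      using mult_mod_six_pred[of q j] j(1) by (simp add: mult.commute)
    also have "\<dots> = j + 5 * (q - 1)"
      using j by (intro mod_pos_pos_trivial) simp_all
    finally show "\<exists>n. P ^ n * j mod (6 * (q - 1)) = j + 5 * (q - 1)"
      unfolding assms(2) by blast
  qed
  show "power_injection P (6 * (q - 1)) (high_residues (q - 1)) (low_residues (q - 1))"
  proof (rule power_injectionI)
    show "inj_on (\<lambda>j. j - 5 * (q - 1)) (high_residues (q - 1))"
      by (rule inj_onI) simp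
    show "(\<lambda>j. j - 5 * (q - 1)) ` high_residues (q - 1) \<subseteq> low_residues (q - 1)"
      using high_residue_shift[OF assms(1)] by blast
    fix j assume "j \<in> high_residues (q - 1)"
    then have j: "j mod 6 = 1" "5 * (q - 1) < j" "j < 6 * (q - 1)"
      by (simp_all add: high_residues_def)
    have "q * j mod (6 * (q - 1)) = (j + (q - 1)) mod (6 * (q - 1))"
      using mult_mod_six_pred[of q j] j(1) by simp
    also have "j + (q - 1) = j - 5 * (q - 1) + 6 * (q - 1)"
      by simp
    also have "(j - 5 * (q - 1) + 6 * (q - 1)) mod (6 * (q - 1)) = (j - 5 * (q - 1)) mod (6 * (q - 1))"
      by (rule mod_add_self2)
    also have "\<dots> = j - 5 * (q - 1)"
      using j by (intro mod_pos_pos_trivial) simp_all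
    finally show "\<exists>n. P ^ n * j mod (6 * (q - 1)) = j - 5 * (q - 1)"
      unfolding assms(2) by blast
  qed
qed

lemma mult_five_mod_six:
  fixes P j :: int
  assumes "P mod 6 = 5"
  shows "j mod 6 = 5 \<Longrightarrow> P * j mod 6 = 1" and "j mod 6 = 1 \<Longrightarrow> P * j mod 6 = 5"
  using assms mod_mult_eq[of P 6 j] by auto

lemma power_injections_even_exponent:
  fixes P q :: int
  assumes "P mod 6 = 5" "6 dvd q - 1" "q \<ge> 2" "coprime P (q - 1)" "q = P ^ f"
  shows "power_injection P (6 * (q - 1)) (low_residues (q - 1)) (high_residues (q - 1))"
    and "power_injection P (6 * (q - 1)) (high_residues (q - 1)) (low_residues (q - 1))"
proof -
  define d where "d = q - 1"
  have d: "d > 0" "6 dvd d" using assms(2,3) by (auto simp: d_def)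
  have power: "P ^ (1 + f * t) * j = q ^ t * (P * j)" for t j
    by (simp add: assms(5) power_add power_mult)
  show "power_injection P (6 * (q - 1)) (low_residues (q - 1)) (high_residues (q - 1))"
    unfolding d_def[symmetric]
  proof (rule power_injectionI)
    have "inj_on (\<lambda>j. P * j mod d) (low_residues d)"
      using assms(4) by (intro inj_on_mult_mod[where c = 0]) (auto simp: d_def low_residues_def)
    then show "inj_on (\<lambda>j. 5 * d + P * j mod d) (low_residues d)"
      unfolding inj_on_def by simp
    show "(\<lambda>j. 5 * d + P * j mod d) ` low_residues d \<subseteq> high_residues d"
    proof (rule image_subsetI)
      fix j assume "j \<in> low_residues d"
      then have "P * j mod d mod 6 = 1"
        using mult_five_mod_six(1)[OF assms(1)] mod_mod_cancel[OF d(2)]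
        by (simp add: low_residues_def)
      moreover from this have "P * j mod d \<noteq> 0" by auto
      moreover have "0 \<le> P * j mod d" "P * j mod d < d" using d(1) by auto
      moreover have "(5 * d + P * j mod d) mod 6 = P * j mod d mod 6"
        using d(2) by (auto simp: mod_add_left_eq[symmetric])
      ultimately show "5 * d + P * j mod d \<in> high_residues d"
        unfolding high_residues_def by auto
    qed
    fix j assume "j \<in> low_residues d"
    then have "P * j mod 6 \<in> {1, 5}"
      using mult_five_mod_six(1)[OF assms(1)] by (simp add: low_residues_def)
    then obtain t where "q ^ t * (P * j) mod (6 * d) = 5 * d + P * j mod d"
      using power_mult_mod_reaches_block[OF assms(2,3), of "P * j" 5] by (auto simp: d_def)
    then show "\<exists>n. P ^ n * j mod (6 * d) = 5 * d + P * j mod d"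
      unfolding power[symmetric] by blast
  qed
  show "power_injection P (6 * (q - 1)) (high_residues (q - 1)) (low_residues (q - 1))"
    unfolding d_def[symmetric]
  proof (rule power_injectionI)
    show "inj_on (\<lambda>j. P * j mod d) (high_residues d)"
      using assms(4) by (intro inj_on_mult_mod[where c = "5 * d"]) (auto simp: d_def high_residues_def)
    show "(\<lambda>j. P * j mod d) ` high_residues d \<subseteq> low_residues d"
    proof (rule image_subsetI)
      fix j assume "j \<in> high_residues d"
      then have "P * j mod d mod 6 = 5"
        using mult_five_mod_six(2)[OF assms(1)] mod_mod_cancel[OF d(2)]
        by (simp add: high_residues_def)
      moreover from this have "P * j mod d \<noteq> 0" by auto
      moreover have "0 \<le> P * j mod d" "P * j mod d < d" using d(1) by auto
      ultimately show "P * j mod d \<in> low_residues d"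
        unfolding low_residues_def by auto
    qed
    fix j assume "j \<in> high_residues d"
    then have "P * j mod 6 \<in> {1, 5}"
      using mult_five_mod_six(2)[OF assms(1)] by (simp add: high_residues_def)
    then obtain t where "q ^ t * (P * j) mod (6 * d) = P * j mod d"
      using power_mult_mod_reaches_block[OF assms(2,3), of "P * j" 0] by (auto simp: d_def)
    then show "\<exists>n. P ^ n * j mod (6 * d) = P * j mod d"
      unfolding power[symmetric] by blast
  qed
qed

lemma low_high_power_injections:
  fixes P q :: int
  assumes "0 \<le> P" "P mod 6 = 5" "f \<ge> 1" "q = P ^ f"
  shows "power_injection P (6 * (q - 1)) (low_residues (q - 1)) (high_residues (q - 1)) \<and>
    power_injection P (6 * (q - 1)) (high_residues (q - 1)) (low_residues (q - 1))"
proof -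
  have "P \<ge> 5" using assms(1,2) by presburger
  then have q: "q \<ge> 2" using self_le_power[of P f] assms(3,4) by simp
  have "coprime (P ^ f) (q - 1)" unfolding assms(4) by (rule coprime_doff_one_right)
  then have "coprime P (q - 1)" using assms(3) by simp
  have "[P ^ f = (-1) ^ f] (mod 6)"
    using assms(2) by (intro cong_pow) (simp add: cong_def)
  then have "q mod 6 = (if even f then 1 else 5)"
    using assms(4) by (simp add: cong_def)
  then consider "6 dvd q - 1" | "q mod 6 = 5"
    by (cases "even f") (auto simp: mod_eq_dvd_iff[of q 6 1, simplified])
  then show ?thesis
  proof cases
    case 1
    then show ?thesis
      using power_injections_even_exponent[OF assms(2) 1 q \<open>coprime P (q - 1)\<close> assms(4)] by blast
  next
    case 2
    then show ?thesis
      using power_injections_odd_exponent[OF 2 assms(4)] by blast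
  qed
qed

theorem proposition10p2:
  fixes p :: nat and f :: nat
  assumes "prime p" and "int p mod 6 = 5" and "f \<ge> 1"
    and "q = int p ^ f"
    and "orb = p_orbit (int p) q x" and "x \<in> S_set q"
  shows "card (orb \<inter> S0_set q) = card (orb \<inter> S1_set q)"
proof -
  have "2 \<le> int p" using prime_ge_2_nat[OF assms(1)] by simp
  also have "int p \<le> int p ^ f" using \<open>2 \<le> int p\<close> assms(3) by (intro self_le_power) auto
  finally have "q \<ge> 2" using assms(4) by simp
  have act: "p_act (int p) q ` S_set q \<subseteq> S_set q"
    using p_act_in_S_set[OF \<open>q \<ge> 2\<close>] by blast
  have orb: "finite orb" "orb \<subseteq> S_set q" "p_act (int p) q ` orb \<subseteq> orb"
    using p_orbit_subset_S_set[OF act assms(6)] p_act_in_p_orbit[of _ "int p" q x] assms(5)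
    by (auto intro: finite_subset simp: S_set_def)
  have encode: "j_index (p_act (int p) q z) = int p * j_index z mod (6 * (q - 1))"
    if "z \<in> S_set q" for z
    using j_index_p_act[OF assms(2) _ that] \<open>q \<ge> 2\<close> by simp
  have j_range: "j_index ` S_set q \<subseteq> {0..<6 * (q - 1)}"
    using j_index_range by blast
  note count = card_le_if_power_injection[OF orb act _ j_range inj_on_j_index]
  have inj: "power_injection (int p) (6 * (q - 1)) (low_residues (q - 1)) (high_residues (q - 1))"
    "power_injection (int p) (6 * (q - 1)) (high_residues (q - 1)) (low_residues (q - 1))"
    using low_high_power_injections[OF _ assms(2,3,4)] by simp_all
  have "card (orb \<inter> S0_set q) \<le> card (orb \<inter> S1_set q)"
    by (rule count[OF _ _ _ inj(1)]) (simp_all add: encode S0_set_iff_low_residue S1_set_iff_high_residue)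
  moreover have "card (orb \<inter> S1_set q) \<le> card (orb \<inter> S0_set q)"
    by (rule count[OF _ _ _ inj(2)]) (simp_all add: encode S0_set_iff_low_residue S1_set_iff_high_residue)
  ultimately show ?thesis by simp
qed

end
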